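(* Let $X = \mathbb{Z}_m$ be the cyclic rack of order $m$, i.e. the set $\mathbb{Z}_m$ with operation $xy = x+1 \pmod m$ (a Rump right quasigroup with $x/y = x-1$), and let $R(x,y) = (y(x/y), x/y) = (y+1, x-1)$ be its associated solution of the Yang-Baxter equation, with set-theoretic Yang-Baxter chain complex $(C^{YB}_n(X),\partial^{YB}_n)$ (defined in the context). Identify a tuple $(a_1,\ldots,a_n)$ with $a_1\otimes\cdots\otimes a_n$, extended multilinearly to formal $\mathbb{Z}$-combinations of elements of $X$ in each slot. Define $\kappa_n: C^{YB}_n(X)\to C^{YB}_n(X)$ on generators by $$\kappa_n(x_1,\ldots,x_n) = (x_1 - x_2x_2)\otimes(x_2 - x_3x_3)\otimes\cdots\otimes(x_{n-1}-x_nx_n)\otimes x_n$$ (so $\kappa_1$ and $\kappa_0$ are the identity), where $x_jx_j$ denotes the product in $X$. Then $\kappa_* = (\kappa_n)_n$ is a chain map: $\partial^{YB}_n\circ\kappa_n = \kappa_{n-1}\circ\partial^{YB}_n$ for all $n$.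
   Context: For a set $X$ and a map $R: X\times X\to X\times X$ with components $R(x,y)=(\nu(x,y),\mu(x,y))$, the set-theoretic Yang-Baxter chain complex is: $C^{YB}_n(X)$ the free abelian group on $X^n$ ($n\ge0$). Face maps $d^l_{i,n}, d^r_{i,n}: X^n\to X^{n-1}$, $1\le i\le n$: $d^l_{1,n}$ deletes the first coordinate; for $i\ge2$, $d^l_{i,n}$ applies $R$ at positions $(i-1,i)$, then $(i-2,i-1)$, ..., then $(2,3)$, then replaces the first two coordinates $(a,b)$ by $\mu(a,b)$. $d^r_{n,n}$ deletes the last coordinate; for $i\le n-1$, $d^r_{i,n}$ applies $R$ at positions $(i,i+1)$, then $(i+1,i+2)$, ..., $(n-2,n-1)$, then replaces the last two coordinates $(a,b)$ by $\nu(a,b)$. The boundary is $\partial^{YB}_n=\sum_{i=1}^n(-1)^{i+1}(d^l_{i,n}-d^r_{i,n})$. *)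

theory Defs
  imports Main
begin

text \<open>Elements of Z_m are represented by the natural numbers 0,...,m-1.\<close>

definition rack_op :: "nat \<Rightarrow> nat \<Rightarrow> nat \<Rightarrow> nat" where
  "rack_op m x y = (x + 1) mod m"

definition rack_div :: "nat \<Rightarrow> nat \<Rightarrow> nat \<Rightarrow> nat" where
  "rack_div m x y = (x + (m - 1)) mod m"

definition nu :: "nat \<Rightarrow> nat \<Rightarrow> nat \<Rightarrow> nat" where
  "nu m x y = rack_op m y (rack_div m x y)"

definition mu :: "nat \<Rightarrow> nat \<Rightarrow> nat \<Rightarrow> nat" where
  "mu m x y = rack_div m x y"

definition R :: "nat \<Rightarrow> nat \<times> nat \<Rightarrow> nat \<times> nat" where
  "R m p = (nu m (fst p) (snd p), mu m (fst p) (snd p))"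

definition appR :: "nat \<Rightarrow> nat \<Rightarrow> nat list \<Rightarrow> nat list" where
  "appR m j xs = (let p = R m (xs ! j, xs ! Suc j) in xs[j := fst p, Suc j := snd p])"

text \<open>d^l_{i,n}: for i = 1 delete the first coordinate; for i >= 2 apply R at 1-based
  positions (i-1,i), (i-2,i-1), ..., (2,3) (0-based i-2 down to 1), then replace the first
  two coordinates (a,b) by mu(a,b).\<close>
definition dl :: "nat \<Rightarrow> nat \<Rightarrow> nat list \<Rightarrow> nat list" where
  "dl m i xs = (if i = 1 then tl xs
     else (let ys = fold (appR m) (rev [1..<i - 1]) xs
           in mu m (ys ! 0) (ys ! 1) # drop 2 ys))"

text \<open>d^r_{i,n}: for i = n delete the last coordinate; for i <= n-1 apply R at 1-based
  positions (i,i+1), ..., (n-2,n-1) (0-based i-1 up to n-3), then replace the last two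
  coordinates (a,b) by nu(a,b).\<close>
definition dr :: "nat \<Rightarrow> nat \<Rightarrow> nat \<Rightarrow> nat list \<Rightarrow> nat list" where
  "dr m n i xs = (if i = n then butlast xs
     else (let ys = fold (appR m) [i - 1..<n - 2] xs
           in take (n - 2) ys @ [nu m (ys ! (n - 2)) (ys ! (n - 1))]))"

definition tuples :: "nat \<Rightarrow> nat \<Rightarrow> nat list set" where
  "tuples m n = {xs. length xs = n \<and> set xs \<subseteq> {..<m}}"

text \<open>Since X is finite, a chain in C^{YB}_n(X) is a function X^n \<rightarrow> int (its coefficients);
  we represent chains as functions on all lists and only read their values on tuples m n.\<close>
definition lin :: "nat \<Rightarrow> nat \<Rightarrow> (nat list \<Rightarrow> nat list \<Rightarrow> int) \<Rightarrow> (nat list \<Rightarrow> int) \<Rightarrow> (nat list \<Rightarrow> int)" where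
  "lin m n g c = (\<lambda>y. \<Sum>x\<in>tuples m n. c x * g x y)"

definition delta :: "'a \<Rightarrow> 'a \<Rightarrow> int" where
  "delta x y = (if x = y then 1 else 0)"

definition bd_gen :: "nat \<Rightarrow> nat \<Rightarrow> nat list \<Rightarrow> nat list \<Rightarrow> int" where
  "bd_gen m n x = (\<lambda>y. \<Sum>i=1..n. (-1) ^ (i + 1) * (delta (dl m i x) y - delta (dr m n i x) y))"

definition bd :: "nat \<Rightarrow> nat \<Rightarrow> (nat list \<Rightarrow> int) \<Rightarrow> (nat list \<Rightarrow> int)" where
  "bd m n = lin m n (bd_gen m n)"

text \<open>Tensor product of formal Z-combinations (functions X \<rightarrow> int), one per slot.\<close>
definition tensor :: "(nat \<Rightarrow> int) list \<Rightarrow> nat list \<Rightarrow> int" where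
  "tensor ss y = (if length y = length ss then (\<Prod>i<length ss. (ss ! i) (y ! i)) else 0)"

definition kappa_gen :: "nat \<Rightarrow> nat \<Rightarrow> nat list \<Rightarrow> nat list \<Rightarrow> int" where
  "kappa_gen m n x = tensor
     (map (\<lambda>j. if j + 1 < n
                then (\<lambda>a. delta (x ! j) a - delta (rack_op m (x ! Suc j) (x ! Suc j)) a)
                else delta (x ! j)) [0..<n])"

definition kappa :: "nat \<Rightarrow> nat \<Rightarrow> (nat list \<Rightarrow> int) \<Rightarrow> (nat list \<Rightarrow> int)" where
  "kappa m n = lin m n (kappa_gen m n)"

end

theory Submission
  imports Defs
begin

(* In the cyclic rack the components mu(a,b) = a - 1 and nu(a,b) = b + 1 of R each ignore
  one argument, so the faces are explicit: d^l_i deletes x_i and decrements x_1, ..., x_{i-1},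
  and d^r_i deletes x_i and increments x_{i+1}, ..., x_n.  Let kappa'(x) (kappa_trunc) be kappa(x)
  without its last factor, i.e. (x_1 - x_2x_2) (x) ... (x) (x_{n-1} - x_nx_n).  On a generator x
  both sides of the chain-map identity equal (-1)^(n+1) (kappa'(x - 1) - kappa'(x)):
  - in the boundary of kappa(x), a face deleting a slot i < n sums up the coefficients of the
    i-th factor, which is zero, and the two faces deleting the last slot give kappa'(x - 1) and
    kappa'(x);
  - the alternating sums of kappa(d^l_i x) and of kappa(d^r_i x) telescope, by induction on x,
    because kappa(a :: w) - kappa(b :: w) = (a - b) (x) kappa(w). *)

definition succ_mod :: "nat \<Rightarrow> nat \<Rightarrow> nat" where
  "succ_mod m a = (a + 1) mod m"

definition pred_mod :: "nat \<Rightarrow> nat \<Rightarrow> nat" where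
  "pred_mod m a = (a + (m - 1)) mod m"

lemma succ_mod_less: "0 < m \<Longrightarrow> succ_mod m a < m"
  by (simp add: succ_mod_def)

lemma pred_mod_less: "0 < m \<Longrightarrow> pred_mod m a < m"
  by (simp add: pred_mod_def)

lemma pred_mod_succ_mod: "a < m \<Longrightarrow> pred_mod m (succ_mod m a) = a"
proof -
  assume a: "a < m"
  have "pred_mod m (succ_mod m a) = (a + 1 + (m - 1)) mod m"
    by (simp add: pred_mod_def succ_mod_def mod_add_left_eq)
  also have "a + 1 + (m - 1) = a + m" using a by simp
  finally show ?thesis using a by simp
qed

lemma succ_mod_pred_mod: "a < m \<Longrightarrow> succ_mod m (pred_mod m a) = a"
proof -
  assume a: "a < m"
  have "succ_mod m (pred_mod m a) = (a + (m - 1) + 1) mod m"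
    by (simp add: pred_mod_def succ_mod_def mod_Suc_eq)
  also have "a + (m - 1) + 1 = a + m" using a by simp
  finally show ?thesis using a by simp
qed

lemma mu_eq: "mu m x y = pred_mod m x"
  by (simp add: mu_def rack_div_def pred_mod_def)

lemma nu_eq: "nu m x y = succ_mod m y"
  by (simp add: nu_def rack_op_def succ_mod_def)

lemma appR_eq: "appR m j xs = xs[j := succ_mod m (xs ! Suc j), Suc j := pred_mod m (xs ! j)]"
  by (simp add: appR_def R_def mu_eq nu_eq)

lemma length_fold_appR [simp]: "length (fold (appR m) js xs) = length xs"
  by (induction js arbitrary: xs) (simp_all add: appR_eq)

lemma fold_appR_map_Suc: "fold (appR m) (map Suc js) (a # xs) = a # fold (appR m) js xs"
  by (induction js arbitrary: xs) (simp_all add: appR_eq)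

lemma appR_0: "appR m 0 (a # b # xs) = succ_mod m b # pred_mod m a # xs"
  by (simp add: appR_eq)

lemma dl_Suc_Cons:
  assumes "1 \<le> i" "i \<le> length xs"
  shows "dl m (Suc i) (a # xs) = pred_mod m a # dl m i xs"
proof (cases "i = 1")
  case True
  then show ?thesis using assms by (cases xs) (simp_all add: dl_def mu_eq)
next
  case False
  then obtain k where i: "i = Suc k" and k: "1 \<le> k" using assms(1) by (cases i) auto
  define zs where "zs = fold (appR m) (rev [1..<k]) xs"
  have "2 \<le> length zs" using assms(2) i k by (simp add: zs_def)
  then obtain p q r where zs: "zs = p # q # r"
    by (metis Suc_le_length_iff numeral_2_eq_2)
  have upt: "rev [1..<i] = map Suc (rev [1..<k] @ [0])"
    using k by (simp add: i rev_map[symmetric] map_Suc_upt upt_conv_Cons del: upt_Suc)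
  have "fold (appR m) (rev [1..<i]) (a # xs) = a # succ_mod m q # pred_mod m p # r"
    unfolding upt fold_appR_map_Suc using zs by (simp add: zs_def appR_0 del: upt_Suc)
  moreover have "dl m i xs = pred_mod m p # r"
    using False zs by (simp add: dl_def i zs_def mu_eq Let_def del: upt_Suc)
  ultimately show ?thesis using False i by (simp add: dl_def mu_eq del: upt_Suc)
qed

(* a' is a decremented k times; the face map d^r_1 discards it. *)
lemma fold_appR_upt_0:
  "k \<le> length xs \<Longrightarrow>
    \<exists>a'. fold (appR m) [0..<k] (a # xs) = map (succ_mod m) (take k xs) @ a' # drop k xs"
proof (induction k arbitrary: a xs)
  case (Suc k)
  then obtain b xs' where xs: "xs = b # xs'" by (cases xs) auto
  have "[0..<Suc k] = 0 # map Suc [0..<k]" by (simp add: upt_conv_Cons map_Suc_upt del: upt_Suc)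
  then have "fold (appR m) [0..<Suc k] (a # xs) =
      succ_mod m b # fold (appR m) [0..<k] (pred_mod m a # xs')"
    by (simp add: xs appR_0 fold_appR_map_Suc del: upt_Suc)
  then show ?case using Suc.IH[of xs' "pred_mod m a"] Suc.prems xs by auto
qed simp

lemma dr_1_Cons: "dr m (Suc (length xs)) 1 (a # xs) = map (succ_mod m) xs"
proof (cases xs rule: rev_cases)
  case (snoc ys b)
  obtain a' where "fold (appR m) [0..<length ys] (a # xs) = map (succ_mod m) ys @ [a', b]"
    using fold_appR_upt_0[of "length ys" xs m a] snoc by auto
  then show ?thesis using snoc by (simp add: dr_def nth_append nu_eq)
qed (simp add: dr_def)

lemma dr_Suc_Cons:
  assumes "1 \<le> i" "i \<le> length xs"
  shows "dr m (Suc (length xs)) (Suc i) (a # xs) = a # dr m (length xs) i xs"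
proof (cases "i = length xs")
  case True
  then show ?thesis using assms by (cases xs) (simp_all add: dr_def)
next
  case False
  then have "2 \<le> length xs" using assms by linarith
  then obtain n where n: "length xs = Suc (Suc n)" by (metis add_2_eq_Suc le_Suc_ex)
  have i: "i = Suc (i - 1)" using assms by simp
  define zs where "zs = fold (appR m) [i - 1..<n] xs"
  have "[i..<Suc n] = map Suc [i - 1..<n]"
    using i by (metis map_Suc_upt)
  then have "fold (appR m) [i..<Suc n] (a # xs) = a # zs"
    by (simp only: zs_def fold_appR_map_Suc)
  then show ?thesis
    using False by (simp add: dr_def n Let_def zs_def del: upt_Suc)
qed

lemma dl_eq:
  "1 \<le> i \<Longrightarrow> i \<le> length x \<Longrightarrow> dl m i x = map (pred_mod m) (take (i - 1) x) @ drop i x"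
proof (induction x arbitrary: i)
  case (Cons a xs)
  show ?case
  proof (cases "i = 1")
    case False
    then obtain j where "i = Suc j" "1 \<le> j" using Cons.prems by (cases i) auto
    then show ?thesis using Cons by (simp add: dl_Suc_Cons take_Cons')
  qed (simp add: dl_def)
qed simp

lemma dr_eq:
  "1 \<le> i \<Longrightarrow> i \<le> length x \<Longrightarrow> dr m (length x) i x = take (i - 1) x @ map (succ_mod m) (drop i x)"
proof (induction x arbitrary: i)
  case (Cons a xs)
  show ?case
  proof (cases "i = 1")
    case False
    then obtain j where "i = Suc j" "1 \<le> j" using Cons.prems by (cases i) auto
    then show ?thesis using Cons by (simp add: dr_Suc_Cons take_Cons')
  qed (use dr_1_Cons in simp)
qed simp

lemma tuples_0: "tuples m 0 = {[]}"
  by (auto simp: tuples_def)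

lemma tuples_Suc: "tuples m (Suc k) = (\<lambda>(a, z). a # z) ` ({..<m} \<times> tuples m k)"
  by (auto simp: tuples_def length_Suc_conv image_iff)

lemma finite_tuples [simp]: "finite (tuples m k)"
  by (induction k) (simp_all add: tuples_0 tuples_Suc)

lemma length_tuples: "z \<in> tuples m k \<Longrightarrow> length z = k"
  by (simp add: tuples_def)

lemma sum_tuples_Suc:
  "(\<Sum>z\<in>tuples m (Suc k). g z) = (\<Sum>a<m. \<Sum>z\<in>tuples m k. g (a # z))"
proof -
  have "inj_on (\<lambda>(a, z). a # z) ({..<m} \<times> tuples m k)"
    by (auto simp: inj_on_def)
  then show ?thesis
    by (simp add: tuples_Suc sum.reindex sum.cartesian_product split_def)
qed

lemma dl_in_tuples:
  assumes "0 < m" "x \<in> tuples m (Suc n)" "1 \<le> i" "i \<le> Suc n"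
  shows "dl m i x \<in> tuples m n"
  using assms pred_mod_less[OF assms(1)]
  by (auto simp: tuples_def dl_eq dest: in_set_takeD in_set_dropD)

lemma dr_in_tuples:
  assumes "0 < m" "x \<in> tuples m (Suc n)" "1 \<le> i" "i \<le> Suc n"
  shows "dr m (Suc n) i x \<in> tuples m n"
  using assms succ_mod_less[OF assms(1)] dr_eq[of i x m]
  by (auto simp: tuples_def dest: in_set_takeD in_set_dropD)

lemma delta_same [simp]: "delta x x = 1"
  by (simp add: delta_def)

lemma delta_Cons_Nil [simp]: "delta (a # z) [] = 0"
  by (simp add: delta_def)

lemma delta_Cons_Cons [simp]: "delta (a # z) (b # y) = delta a b * delta z y"
  by (simp add: delta_def)

lemma sum_delta_mult: "finite A \<Longrightarrow> (\<Sum>z\<in>A. delta w z * f z) = (if w \<in> A then f w else 0)"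
  by (simp add: delta_def if_distrib[of "\<lambda>x. x * _"] cong: if_cong)

lemma sum_delta_diff:
  fixes g :: "nat \<Rightarrow> int"
  assumes "a < m" "a' < m"
  shows "(\<Sum>c<m. (delta a c - delta a' c) * g c) = g a - g a'"
  using assms by (simp add: left_diff_distrib sum_subtractf sum_delta_mult)

definition tensor_cons :: "(nat \<Rightarrow> int) \<Rightarrow> (nat list \<Rightarrow> int) \<Rightarrow> nat list \<Rightarrow> int" where
  "tensor_cons u c y = (case y of [] \<Rightarrow> 0 | b # y' \<Rightarrow> u b * c y')"

lemma tensor_cons_Nil [simp]: "tensor_cons u c [] = 0"
  by (simp add: tensor_cons_def)

lemma tensor_cons_Cons [simp]: "tensor_cons u c (b # y) = u b * c y"
  by (simp add: tensor_cons_def)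

lemma sum_tensor_cons:
  "(\<Sum>i\<in>I. s i * tensor_cons u (c i) y) = tensor_cons u (\<lambda>z. \<Sum>i\<in>I. s i * c i z) y"
  by (cases y) (simp_all add: sum_distrib_left mult_ac)

lemma tensor_cons_scale: "tensor_cons u (\<lambda>z. s * c z) y = s * tensor_cons u c y"
  by (cases y) simp_all

lemma tensor_Nil: "tensor [] = delta []"
  by (simp add: fun_eq_iff tensor_def delta_def)

lemma tensor_Cons: "tensor (u # ss) = tensor_cons u (tensor ss)"
  by (rule ext, case_tac x)
    (simp_all add: tensor_def prod.lessThan_Suc_shift del: prod.lessThan_Suc)

lemma lin_lin: "lin m k g (lin m n f c) = lin m n (\<lambda>x. lin m k g (f x)) c"
  unfolding lin_def
  by (rule ext) (simp add: sum_distrib_left sum_distrib_right mult.assoc sum.swap[of _ "tuples m k"])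

lemma lin_cong: "(\<And>x. x \<in> tuples m n \<Longrightarrow> f x = g x) \<Longrightarrow> lin m n f c = lin m n g c"
  by (simp add: lin_def)

lemma lin_delta: "z \<in> tuples m n \<Longrightarrow> lin m n g (delta z) y = g z y"
  by (simp add: lin_def sum_delta_mult)

lemma lin_bd_gen:
  "lin m k g (bd_gen m N x) y =
    (\<Sum>i=1..N. (-1) ^ (i + 1) * (lin m k g (delta (dl m i x)) y - lin m k g (delta (dr m N i x)) y))"
proof -
  have "lin m k g (bd_gen m N x) y = (\<Sum>z\<in>tuples m k. \<Sum>i=1..N.
      (-1) ^ (i + 1) * (delta (dl m i x) z * g z y - delta (dr m N i x) z * g z y))"
    unfolding lin_def bd_gen_def
    by (intro sum.cong refl) (simp add: sum_distrib_left sum_distrib_right algebra_simps)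
  also have "\<dots> = (\<Sum>i=1..N. \<Sum>z\<in>tuples m k.
      (-1) ^ (i + 1) * (delta (dl m i x) z * g z y - delta (dr m N i x) z * g z y))"
    by (rule sum.swap)
  also have "\<dots> = (\<Sum>i=1..N.
      (-1) ^ (i + 1) * (lin m k g (delta (dl m i x)) y - lin m k g (delta (dr m N i x)) y))"
    unfolding lin_def by (simp only: sum_distrib_left[symmetric] sum_subtractf)
  finally show ?thesis .
qed

definition pushforward ::
    "nat \<Rightarrow> nat \<Rightarrow> (nat list \<Rightarrow> nat list) \<Rightarrow> (nat list \<Rightarrow> int) \<Rightarrow> nat list \<Rightarrow> int" where
  "pushforward m k \<phi> = lin m k (\<lambda>z. delta (\<phi> z))"

lemma bd_eq_pushforward:
  "bd m N c y = (\<Sum>i=1..N.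
    (-1) ^ (i + 1) * (pushforward m N (dl m i) c y - pushforward m N (dr m N i) c y))"
proof -
  have "bd m N c y = (\<Sum>x\<in>tuples m N. \<Sum>i=1..N.
      (-1) ^ (i + 1) * (c x * delta (dl m i x) y - c x * delta (dr m N i x) y))"
    by (simp add: bd_def lin_def bd_gen_def sum_distrib_left algebra_simps)
  also have "\<dots> = (\<Sum>i=1..N. \<Sum>x\<in>tuples m N.
      (-1) ^ (i + 1) * (c x * delta (dl m i x) y - c x * delta (dr m N i x) y))"
    by (rule sum.swap)
  also have "\<dots> = (\<Sum>i=1..N.
      (-1) ^ (i + 1) * (pushforward m N (dl m i) c y - pushforward m N (dr m N i) c y))"
    unfolding pushforward_def lin_def by (simp only: sum_distrib_left[symmetric] sum_subtractf)
  finally show ?thesis .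
qed

lemma pushforward_0: "pushforward m 0 \<phi> c y = c [] * delta (\<phi> []) y"
  by (simp add: pushforward_def lin_def tuples_0)

lemma pushforward_tensor_cons:
  assumes "\<And>a z. a < m \<Longrightarrow> z \<in> tuples m k \<Longrightarrow> \<phi> (a # z) = f a # \<psi> z"
  shows "pushforward m (Suc k) \<phi> (tensor_cons u c) y =
    tensor_cons (\<lambda>b. \<Sum>a<m. u a * delta (f a) b) (pushforward m k \<psi> c) y"
proof -
  have "pushforward m (Suc k) \<phi> (tensor_cons u c) y =
      (\<Sum>a<m. \<Sum>z\<in>tuples m k. u a * c z * delta (f a # \<psi> z) y)"
    unfolding pushforward_def lin_def sum_tuples_Suc by (intro sum.cong refl) (simp add: assms)
  then show ?thesis by (cases y) (simp_all add: pushforward_def lin_def sum_product mult_ac)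
qed

lemma pushforward_tensor_cons_drop:
  assumes "\<And>a z. a < m \<Longrightarrow> z \<in> tuples m k \<Longrightarrow> \<phi> (a # z) = \<psi> z"
  shows "pushforward m (Suc k) \<phi> (tensor_cons u c) y = (\<Sum>a<m. u a) * pushforward m k \<psi> c y"
proof -
  have "pushforward m (Suc k) \<phi> (tensor_cons u c) y =
      (\<Sum>a<m. \<Sum>z\<in>tuples m k. u a * (c z * delta (\<psi> z) y))"
    unfolding pushforward_def lin_def sum_tuples_Suc by (intro sum.cong refl) (simp add: assms)
  then show ?thesis by (simp add: pushforward_def lin_def sum_product)
qed

definition kappa_factor :: "nat \<Rightarrow> nat \<Rightarrow> nat \<Rightarrow> nat \<Rightarrow> int" where
  "kappa_factor m a b = (\<lambda>c. delta a c - delta (succ_mod m b) c)"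

fun kappa_chain :: "nat \<Rightarrow> nat list \<Rightarrow> nat list \<Rightarrow> int" where
  "kappa_chain m [] = delta []"
| "kappa_chain m [a] = tensor_cons (delta a) (delta [])"
| "kappa_chain m (a # b # w) = tensor_cons (kappa_factor m a b) (kappa_chain m (b # w))"

fun kappa_trunc :: "nat \<Rightarrow> nat list \<Rightarrow> nat list \<Rightarrow> int" where
  "kappa_trunc m (a # b # w) = tensor_cons (kappa_factor m a b) (kappa_trunc m (b # w))"
| "kappa_trunc m _ = delta []"

lemma kappa_gen_eq_kappa_chain: "kappa_gen m (length x) x = kappa_chain m x"
proof (induction m x rule: kappa_chain.induct)
  case (3 m a b w)
  have "[0..<length (a # b # w)] = 0 # map Suc [0..<length (b # w)]"
    by (metis length_Cons map_Suc_upt upt_conv_Cons zero_less_Suc)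
  then show ?case
    using 3 by (simp add: kappa_gen_def tensor_Cons kappa_factor_def rack_op_def succ_mod_def o_def
        cong: if_cong del: upt_Suc)
qed (simp_all add: kappa_gen_def tensor_Cons tensor_Nil)

lemma kappa_chain_Cons_diff:
  "kappa_chain m (a # w) y - kappa_chain m (b # w) y =
    tensor_cons (\<lambda>c. delta a c - delta b c) (kappa_chain m w) y"
  by (cases w; cases y) (simp_all add: kappa_factor_def algebra_simps)

lemma pushforward_kappa_factor:
  assumes "0 < m" "a < m"
  shows "(\<lambda>d. \<Sum>c<m. kappa_factor m a b c * delta (f c) d) =
    (\<lambda>d. delta (f a) d - delta (f (succ_mod m b)) d)"
  using sum_delta_diff[OF assms(2) succ_mod_less[OF assms(1)]] by (simp add: kappa_factor_def)

lemma sum_kappa_factor: "0 < m \<Longrightarrow> a < m \<Longrightarrow> (\<Sum>c<m. kappa_factor m a b c) = 0"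
  using sum_delta_diff[of a m "succ_mod m b" "\<lambda>_. 1"] succ_mod_less by (simp add: kappa_factor_def)

lemma pushforward_dl_kappa_chain:
  assumes "0 < m" "x \<in> tuples m N" "1 \<le> i" "i \<le> N"
  shows "pushforward m N (dl m i) (kappa_chain m x) y =
    (if i = N then kappa_trunc m (map (pred_mod m) x) y else 0)"
  using assms
proof (induction m x arbitrary: N i y rule: kappa_chain.induct)
  case (2 m a)
  then have "N = Suc 0" "i = 1" "a < m" by (auto simp: tuples_def)
  moreover have "pushforward m (Suc 0) (dl m 1) (tensor_cons (delta a) (delta [])) y =
      (\<Sum>c<m. delta a c) * pushforward m 0 (\<lambda>z. z) (delta []) y"
    by (rule pushforward_tensor_cons_drop) (simp add: dl_def)
  ultimately show ?case by (simp add: pushforward_0 sum_delta_mult[where f = "\<lambda>_. 1", simplified])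
next
  case (3 m a b w)
  then have N: "N = Suc (length (b # w))" and "a < m" "b < m" and bw: "b # w \<in> tuples m (length (b # w))"
    by (auto simp: tuples_def)
  show ?case
  proof (cases "i = 1")
    case True
    have "pushforward m N (dl m i) (kappa_chain m (a # b # w)) y =
        (\<Sum>c<m. kappa_factor m a b c) *
          pushforward m (length (b # w)) (\<lambda>z. z) (kappa_chain m (b # w)) y"
      unfolding N kappa_chain.simps by (rule pushforward_tensor_cons_drop) (simp_all add: True dl_def)
    then show ?thesis using True N sum_kappa_factor[OF \<open>0 < m\<close> \<open>a < m\<close>] by simp
  next
    case False
    then obtain j where i: "i = Suc j" and j: "1 \<le> j" "j \<le> length (b # w)"
      using "3.prems" N by (cases i) auto
    have "dl m (Suc j) (c # z) = pred_mod m c # dl m j z"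
      if "z \<in> tuples m (length (b # w))" for c z
      using that j by (simp add: dl_Suc_Cons length_tuples)
    then have "pushforward m N (dl m i) (kappa_chain m (a # b # w)) y =
        tensor_cons (\<lambda>d. \<Sum>c<m. kappa_factor m a b c * delta (pred_mod m c) d)
          (pushforward m (length (b # w)) (dl m j) (kappa_chain m (b # w))) y"
      unfolding N i kappa_chain.simps by (rule pushforward_tensor_cons)
    also have "(\<lambda>d. \<Sum>c<m. kappa_factor m a b c * delta (pred_mod m c) d) =
        kappa_factor m (pred_mod m a) (pred_mod m b)"
      using pushforward_kappa_factor[OF "3.prems"(1) \<open>a < m\<close>, of b "pred_mod m"] \<open>b < m\<close>
      by (simp add: kappa_factor_def pred_mod_succ_mod succ_mod_pred_mod)
    also have "tensor_cons (kappa_factor m (pred_mod m a) (pred_mod m b))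
        (pushforward m (length (b # w)) (dl m j) (kappa_chain m (b # w))) y =
        (if i = N then kappa_trunc m (map (pred_mod m) (a # b # w)) y else 0)"
      using "3.IH"[OF "3.prems"(1) bw j] N i by (cases y) simp_all
    finally show ?thesis .
  qed
qed (simp add: tuples_def)

lemma pushforward_dr_kappa_chain:
  assumes "0 < m" "x \<in> tuples m N" "1 \<le> i" "i \<le> N"
  shows "pushforward m N (dr m N i) (kappa_chain m x) y = (if i = N then kappa_trunc m x y else 0)"
  using assms
proof (induction m x arbitrary: N i y rule: kappa_chain.induct)
  case (2 m a)
  then have "N = Suc 0" "i = 1" "a < m" by (auto simp: tuples_def)
  moreover have "pushforward m (Suc 0) (dr m (Suc 0) 1) (tensor_cons (delta a) (delta [])) y =
      (\<Sum>c<m. delta a c) * pushforward m 0 (\<lambda>z. z) (delta []) y"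
    by (rule pushforward_tensor_cons_drop) (simp add: dr_def tuples_0)
  ultimately show ?case by (simp add: pushforward_0 sum_delta_mult[where f = "\<lambda>_. 1", simplified])
next
  case (3 m a b w)
  then have N: "N = Suc (length (b # w))" and "a < m" and bw: "b # w \<in> tuples m (length (b # w))"
    by (auto simp: tuples_def)
  show ?case
  proof (cases "i = 1")
    case True
    have "dr m N 1 (c # z) = map (succ_mod m) z" if "z \<in> tuples m (length (b # w))" for c z
      using that dr_1_Cons[of m z c] N by (simp add: length_tuples)
    then have "pushforward m N (dr m N i) (kappa_chain m (a # b # w)) y =
        (\<Sum>c<m. kappa_factor m a b c) *
          pushforward m (length (b # w)) (map (succ_mod m)) (kappa_chain m (b # w)) y"
      unfolding N kappa_chain.simps True by (rule pushforward_tensor_cons_drop)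
    then show ?thesis using True N sum_kappa_factor[OF \<open>0 < m\<close> \<open>a < m\<close>] by simp
  next
    case False
    then obtain j where i: "i = Suc j" and j: "1 \<le> j" "j \<le> length (b # w)"
      using "3.prems" N by (cases i) auto
    have "dr m (Suc (length (b # w))) (Suc j) (c # z) = c # dr m (length (b # w)) j z"
      if "z \<in> tuples m (length (b # w))" for c z
      using that j dr_Suc_Cons[of j z m c] by (simp add: length_tuples)
    then have "pushforward m N (dr m N i) (kappa_chain m (a # b # w)) y =
        tensor_cons (\<lambda>d. \<Sum>c<m. kappa_factor m a b c * delta c d)
          (pushforward m (length (b # w)) (dr m (length (b # w)) j) (kappa_chain m (b # w))) y"
      unfolding N i kappa_chain.simps by (rule pushforward_tensor_cons)
    also have "(\<lambda>d. \<Sum>c<m. kappa_factor m a b c * delta c d) = kappa_factor m a b"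
      using pushforward_kappa_factor[OF "3.prems"(1) \<open>a < m\<close>, of b "\<lambda>c. c"]
      by (simp add: kappa_factor_def)
    also have "tensor_cons (kappa_factor m a b)
        (pushforward m (length (b # w)) (dr m (length (b # w)) j) (kappa_chain m (b # w))) y =
        (if i = N then kappa_trunc m (a # b # w) y else 0)"
      using "3.IH"[OF "3.prems"(1) bw j] N i by (cases y) simp_all
    finally show ?thesis .
  qed
qed (simp add: tuples_def)

lemma bd_kappa_chain:
  assumes "0 < m" "x \<in> tuples m N" "1 \<le> N"
  shows "bd m N (kappa_chain m x) y =
    (-1) ^ (N + 1) * (kappa_trunc m (map (pred_mod m) x) y - kappa_trunc m x y)"
proof -
  have "bd m N (kappa_chain m x) y = (\<Sum>i=1..N. if i = N
      then (-1) ^ (N + 1) * (kappa_trunc m (map (pred_mod m) x) y - kappa_trunc m x y) else 0)"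
    unfolding bd_eq_pushforward
    by (intro sum.cong refl)
      (simp add: pushforward_dl_kappa_chain[OF assms(1,2)] pushforward_dr_kappa_chain[OF assms(1,2)])
  then show ?thesis using assms(3) by simp
qed

lemma alternating_sum_telescope:
  fixes F G :: "nat \<Rightarrow> 'a::comm_ring_1"
  assumes "1 \<le> N" and "\<And>i. 1 \<le> i \<Longrightarrow> i \<le> N \<Longrightarrow> F (Suc i) = (if i = 1 then F 1 else 0) + G i"
  shows "(\<Sum>i=1..Suc N. (-1) ^ (i + 1) * F i) = - (\<Sum>i=1..N. (-1) ^ (i + 1) * G i)"
proof -
  have "(\<Sum>i=1..Suc N. (-1) ^ (i + 1) * F i) =
      F 1 + (\<Sum>i=Suc 1..Suc N. (-1) ^ (i + 1) * F i)"
    by (subst sum.atLeast_Suc_atMost) simp_all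
  also have "(\<Sum>i=Suc 1..Suc N. (-1) ^ (i + 1) * F i) = - (\<Sum>i=1..N. (-1) ^ (i + 1) * F (Suc i))"
    by (simp only: sum.shift_bounds_cl_Suc_ivl sum_negf[symmetric]) simp
  also have "(\<Sum>i=1..N. (-1) ^ (i + 1) * F (Suc i)) =
      (\<Sum>i=1..N. (-1) ^ (i + 1) * (if i = 1 then F 1 else 0)) + (\<Sum>i=1..N. (-1) ^ (i + 1) * G i)"
    unfolding sum.distrib[symmetric] by (intro sum.cong refl) (simp add: assms(2) distrib_left)
  also have "(\<Sum>i=1..N. (-1) ^ (i + 1) * (if i = 1 then F 1 else 0)) = F 1"
    using assms(1) by (simp add: if_distrib[of "\<lambda>x. _ * x"] sum.delta cong: if_cong)
  finally show ?thesis by (simp add: algebra_simps)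
qed

lemma alternating_sum_kappa_chain_dl:
  assumes "0 < m" "x \<in> tuples m N" "1 \<le> N"
  shows "(\<Sum>i=1..N. (-1) ^ (i + 1) * kappa_chain m (dl m i x) y) =
    (-1) ^ (N + 1) * kappa_trunc m (map (pred_mod m) x) y"
  using assms
proof (induction m x arbitrary: N y rule: kappa_chain.induct)
  case (2 m a)
  then show ?case by (simp add: tuples_def dl_def)
next
  case (3 m a b w)
  define n where "n = length (b # w)"
  have N: "N = Suc n" and "1 \<le> n" and "a < m" "b < m" and bw: "b # w \<in> tuples m n"
    using "3.prems"(2) by (auto simp: tuples_def n_def)
  let ?u = "kappa_factor m (pred_mod m a) (pred_mod m b)"
  have u: "?u = (\<lambda>c. delta (pred_mod m a) c - delta b c)"
    using \<open>b < m\<close> by (simp add: kappa_factor_def succ_mod_pred_mod)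
  have step: "kappa_chain m (dl m (Suc i) (a # b # w)) y =
      (if i = 1 then kappa_chain m (dl m 1 (a # b # w)) y else 0) +
      tensor_cons ?u (kappa_chain m (dl m i (b # w))) y"
    if i: "1 \<le> i" "i \<le> n" for i
  proof (cases "i = 1")
    case True
    then show ?thesis
      using kappa_chain_Cons_diff[of m "pred_mod m a" w y b] i
      by (simp add: u n_def dl_Suc_Cons dl_def mu_eq diff_eq_eq)
  next
    case False
    then obtain j where "i = Suc j" "1 \<le> j" "j \<le> length w" using i by (cases i) (auto simp: n_def)
    then show ?thesis using i by (simp add: n_def dl_Suc_Cons)
  qed
  have "(\<Sum>i=1..N. (-1) ^ (i + 1) * kappa_chain m (dl m i (a # b # w)) y) =
      - (\<Sum>i=1..n. (-1) ^ (i + 1) * tensor_cons ?u (kappa_chain m (dl m i (b # w))) y)"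
    unfolding N using \<open>1 \<le> n\<close> step by (rule alternating_sum_telescope)
  also have "\<dots> = - tensor_cons ?u (\<lambda>z. \<Sum>i=1..n. (-1) ^ (i + 1) * kappa_chain m (dl m i (b # w)) z) y"
    by (simp only: sum_tensor_cons)
  also have "\<dots> = - tensor_cons ?u (\<lambda>z. (-1) ^ (n + 1) * kappa_trunc m (map (pred_mod m) (b # w)) z) y"
    using "3.IH"[OF "3.prems"(1) bw \<open>1 \<le> n\<close>] by simp
  also have "\<dots> = (-1) ^ (N + 1) * kappa_trunc m (map (pred_mod m) (a # b # w)) y"
    by (simp only: tensor_cons_scale) (simp add: N)
  finally show ?case .
qed (simp add: tuples_def)

lemma alternating_sum_kappa_chain_dr:
  assumes "0 < m" "x \<in> tuples m N" "1 \<le> N"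
  shows "(\<Sum>i=1..N. (-1) ^ (i + 1) * kappa_chain m (dr m N i x) y) = (-1) ^ (N + 1) * kappa_trunc m x y"
  using assms
proof (induction m x arbitrary: N y rule: kappa_chain.induct)
  case (2 m a)
  then show ?case by (simp add: tuples_def dr_def)
next
  case (3 m a b w)
  define n where "n = length (b # w)"
  have N: "N = Suc n" and "1 \<le> n" and bw: "b # w \<in> tuples m n"
    using "3.prems"(2) by (auto simp: tuples_def n_def)
  let ?u = "kappa_factor m a b"
  have step: "kappa_chain m (dr m N (Suc i) (a # b # w)) y =
      (if i = 1 then kappa_chain m (dr m N 1 (a # b # w)) y else 0) +
      tensor_cons ?u (kappa_chain m (dr m n i (b # w))) y"
    if i: "1 \<le> i" "i \<le> n" for i
  proof (cases "i = 1")
    case True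
    then show ?thesis
      using kappa_chain_Cons_diff[of m a "map (succ_mod m) w" y "succ_mod m b"] i
        dr_1_Cons[of m "b # w" a] dr_Suc_Cons[of 1 "b # w" m a] dr_1_Cons[of m w b]
      by (simp add: N n_def kappa_factor_def)
  next
    case False
    then obtain j where "i = Suc j" "1 \<le> j" "j \<le> length w" using i by (cases i) (auto simp: n_def)
    then show ?thesis
      using i dr_Suc_Cons[of i "b # w" m a] dr_Suc_Cons[of j w m b] by (simp add: N n_def)
  qed
  have "(\<Sum>i=1..N. (-1) ^ (i + 1) * kappa_chain m (dr m N i (a # b # w)) y) =
      - (\<Sum>i=1..n. (-1) ^ (i + 1) * tensor_cons ?u (kappa_chain m (dr m n i (b # w))) y)"
    unfolding N using \<open>1 \<le> n\<close> step[unfolded N] by (rule alternating_sum_telescope)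
  also have "\<dots> = - tensor_cons ?u (\<lambda>z. \<Sum>i=1..n. (-1) ^ (i + 1) * kappa_chain m (dr m n i (b # w)) z) y"
    by (simp only: sum_tensor_cons)
  also have "\<dots> = - tensor_cons ?u (\<lambda>z. (-1) ^ (n + 1) * kappa_trunc m (b # w) z) y"
    using "3.IH"[OF "3.prems"(1) bw \<open>1 \<le> n\<close>] by simp
  also have "\<dots> = (-1) ^ (N + 1) * kappa_trunc m (a # b # w) y"
    by (simp only: tensor_cons_scale) (simp add: N)
  finally show ?case .
qed (simp add: tuples_def)

lemma kappa_bd_gen:
  assumes "0 < m" "x \<in> tuples m (Suc n)"
  shows "kappa m n (bd_gen m (Suc n) x) y =
    (-1) ^ (Suc n + 1) * (kappa_trunc m (map (pred_mod m) x) y - kappa_trunc m x y)"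
proof -
  have "kappa m n (bd_gen m (Suc n) x) y = (\<Sum>i=1..Suc n.
      (-1) ^ (i + 1) * (kappa_chain m (dl m i x) y - kappa_chain m (dr m (Suc n) i x) y))"
    unfolding kappa_def lin_bd_gen
  proof (intro sum.cong refl)
    fix i assume "i \<in> {1..Suc n}"
    then have "dl m i x \<in> tuples m n" "dr m (Suc n) i x \<in> tuples m n"
      using dl_in_tuples[OF assms] dr_in_tuples[OF assms] by auto
    then show "(-1) ^ (i + 1) * (lin m n (kappa_gen m n) (delta (dl m i x)) y -
        lin m n (kappa_gen m n) (delta (dr m (Suc n) i x)) y) =
      (-1) ^ (i + 1) * (kappa_chain m (dl m i x) y - kappa_chain m (dr m (Suc n) i x) y)"
      by (simp add: lin_delta length_tuples kappa_gen_eq_kappa_chain[symmetric])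
  qed
  also have "\<dots> = (\<Sum>i=1..Suc n. (-1) ^ (i + 1) * kappa_chain m (dl m i x) y) -
      (\<Sum>i=1..Suc n. (-1) ^ (i + 1) * kappa_chain m (dr m (Suc n) i x) y)"
    by (simp only: right_diff_distrib sum_subtractf)
  also have "\<dots> = (-1) ^ (Suc n + 1) * (kappa_trunc m (map (pred_mod m) x) y - kappa_trunc m x y)"
    using alternating_sum_kappa_chain_dl[OF assms] alternating_sum_kappa_chain_dr[OF assms]
    by (simp only: right_diff_distrib le_add1 Suc_eq_plus1[symmetric])
  finally show ?thesis .
qed

lemma bd_kappa_gen_eq_kappa_bd_gen:
  assumes "0 < m" "x \<in> tuples m (Suc n)"
  shows "bd m (Suc n) (kappa_gen m (Suc n) x) = kappa m n (bd_gen m (Suc n) x)"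
  using bd_kappa_chain[OF assms] kappa_bd_gen[OF assms] length_tuples[OF assms(2)]
  by (simp add: fun_eq_iff kappa_gen_eq_kappa_chain[symmetric])

theorem mainTheorem4:
  fixes m n :: nat and c :: "nat list \<Rightarrow> int"
  assumes "m \<ge> 1"
  shows "bd m (Suc n) (kappa m (Suc n) c) = kappa m n (bd m (Suc n) c)"
proof -
  have "lin m (Suc n) (\<lambda>x. bd m (Suc n) (kappa_gen m (Suc n) x)) c =
      lin m (Suc n) (\<lambda>x. kappa m n (bd_gen m (Suc n) x)) c"
    using assms by (intro lin_cong bd_kappa_gen_eq_kappa_bd_gen) simp_all
  then show ?thesis
    unfolding bd_def kappa_def lin_lin .
qed

end
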